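(* Let $\widehat{\Gamma}$ be a Harnack graph with controlled, uniformly lazy weights $(\pi,\mu)$. Let $K$ be a set of vertices of $\widehat{\Gamma}$ and $\Gamma:=\widehat{\Gamma}\setminus K$ (so $\partial\Gamma\subseteq K$). For $x\in\widehat{\Gamma}$ and $r>0$ set $B_{\partial\Gamma}(x,r)=B_{\widehat\Gamma}(x,r)\cap\partial\Gamma$, $V_{\partial\Gamma}(x,r)=\pi(B_{\partial\Gamma}(x,r))$, and for $x\in\Gamma$ set \[W(x,r):=\frac{V_{\widehat\Gamma}(x,r)}{V_{\partial\Gamma}(x,r)}.\] Then there is a constant $C$ such that, with $d_x:=d(x,K)$, \[\psi_K(x)\le \sum_{n\ge d_x^2}\frac{C}{W(x,\sqrt n)}\qquad\text{for all } x\in\Gamma\setminus\partial_I\Gamma.\]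
   Context: $\widehat{\Gamma}=(\widehat V,\widehat E)$ is an infinite simple connected graph with symmetric edge weights $\mu_{xy}=\mu_{yx}$, $\mu_{xy}\ne0$ iff $x\sim y$, vertex weights $\pi>0$ with $\sum_{y\sim x}\mu_{xy}\le\pi(x)$; Markov kernel $\mathcal{K}(x,y)=\mu_{xy}/\pi(x)$ ($x\neq y$), $\mathcal{K}(x,x)=1-\sum_{z\sim x}\mu_{xz}/\pi(x)$. Controlled weights: $\exists C_c>1$ with $\mu_{xy}/\pi(x)\ge1/C_c$ for all $y\sim x$. Uniformly lazy: $\exists C_e\in(0,1)$ with $\mathcal{K}(x,x)\ge C_e$ for all $x$. $d$ is the graph distance of $\widehat\Gamma$, $B_{\widehat\Gamma}(x,r)=\{y:d(x,y)\le r\}$, $V_{\widehat\Gamma}(x,r)=\pi(B_{\widehat\Gamma}(x,r))$. The heat kernel is $p(n,x,y)=\mathcal{K}^n(x,y)/\pi(y)$. $\widehat\Gamma$ is a Harnack graph if there are constants $c_1,c_2,c_3,c_4>0$ with $\frac{c_1}{V(x,\sqrt n)}e^{-d(x,y)^2/(c_2n)}\le p(n,x,y)\le\frac{c_3}{V(x,\sqrt n)}e^{-d(x,y)^2/(c_4 n)}$ for all $x,y$ and $n\ge d(x,y)$ (equivalently, volume doubling plus a Poincaré inequality). $\Gamma$ is the subgraph induced on $\widehat V\setminus K$; $\partial\Gamma$ is the set of vertices outside $\Gamma$ adjacent to $\Gamma$, and $\partial_I\Gamma$ the set of vertices of $\Gamma$ adjacent to a vertex outside $\Gamma$. $\psi_K(x)=\mathbb{P}^x(\tau_K<\infty)$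 where $\tau_K=\min\{n\ge0:X_n\in K\}$ for the random walk $(X_n)$ driven by $\mathcal{K}$. When $V_{\partial\Gamma}(x,r)=0$, $1/W(x,r)=0$. *)

theory Defs
  imports "HOL-Analysis.Analysis"
begin

definition adj :: "('a \<Rightarrow> 'a \<Rightarrow> real) \<Rightarrow> 'a \<Rightarrow> 'a \<Rightarrow> bool" where
  "adj \<mu> x y \<longleftrightarrow> x \<noteq> y \<and> \<mu> x y \<noteq> 0"

definition nbrs :: "('a \<Rightarrow> 'a \<Rightarrow> real) \<Rightarrow> 'a \<Rightarrow> 'a set" where
  "nbrs \<mu> x = {y. adj \<mu> x y}"

definition adjrel :: "('a \<Rightarrow> 'a \<Rightarrow> real) \<Rightarrow> ('a \<times> 'a) set" where
  "adjrel \<mu> = {(x, y). adj \<mu> x y}"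

text \<open>Infinite simple connected graph with symmetric edge weights and positive vertex weights,
  with sum over neighbours of mu x y at most pi x (stated for every finite set of neighbours,
  which does not presuppose local finiteness).\<close>
definition weighted_graph :: "('a \<Rightarrow> 'a \<Rightarrow> real) \<Rightarrow> ('a \<Rightarrow> real) \<Rightarrow> bool" where
  "weighted_graph \<mu> \<pi> \<longleftrightarrow>
     infinite (UNIV :: 'a set) \<and>
     (\<forall>x y. \<mu> x y = \<mu> y x) \<and>
     (\<forall>x. \<mu> x x = 0) \<and>
     (\<forall>x. \<pi> x > 0) \<and>
     (\<forall>x F. finite F \<longrightarrow> F \<subseteq> nbrs \<mu> x \<longrightarrow> (\<Sum>y\<in>F. \<mu> x y) \<le> \<pi> x) \<and>
     (\<forall>x y. (x, y) \<in> (adjrel \<mu>)\<^sup>*)"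

definition kernel :: "('a \<Rightarrow> 'a \<Rightarrow> real) \<Rightarrow> ('a \<Rightarrow> real) \<Rightarrow> 'a \<Rightarrow> 'a \<Rightarrow> real" where
  "kernel \<mu> \<pi> x y =
     (if x = y then 1 - (\<Sum>z\<in>nbrs \<mu> x. \<mu> x z) / \<pi> x else \<mu> x y / \<pi> x)"

primrec kpow :: "('a \<Rightarrow> 'a \<Rightarrow> real) \<Rightarrow> ('a \<Rightarrow> real) \<Rightarrow> nat \<Rightarrow> 'a \<Rightarrow> 'a \<Rightarrow> real" where
  "kpow \<mu> \<pi> 0 x y = (if x = y then 1 else 0)"
| "kpow \<mu> \<pi> (Suc n) x y = (\<Sum>z\<in>insert x (nbrs \<mu> x). kernel \<mu> \<pi> x z * kpow \<mu> \<pi> n z y)"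

definition heat_kernel :: "('a \<Rightarrow> 'a \<Rightarrow> real) \<Rightarrow> ('a \<Rightarrow> real) \<Rightarrow> nat \<Rightarrow> 'a \<Rightarrow> 'a \<Rightarrow> real" where
  "heat_kernel \<mu> \<pi> n x y = kpow \<mu> \<pi> n x y / \<pi> y"

definition gdist :: "('a \<Rightarrow> 'a \<Rightarrow> real) \<Rightarrow> 'a \<Rightarrow> 'a \<Rightarrow> nat" where
  "gdist \<mu> x y = (LEAST n. (x, y) \<in> adjrel \<mu> ^^ n)"

definition gball :: "('a \<Rightarrow> 'a \<Rightarrow> real) \<Rightarrow> 'a \<Rightarrow> real \<Rightarrow> 'a set" where
  "gball \<mu> x r = {y. real (gdist \<mu> x y) \<le> r}"

definition vol :: "('a \<Rightarrow> 'a \<Rightarrow> real) \<Rightarrow> ('a \<Rightarrow> real) \<Rightarrow> 'a \<Rightarrow> real \<Rightarrow> real" where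
  "vol \<mu> \<pi> x r = (\<Sum>y\<in>gball \<mu> x r. \<pi> y)"

definition harnack :: "('a \<Rightarrow> 'a \<Rightarrow> real) \<Rightarrow> ('a \<Rightarrow> real) \<Rightarrow> bool" where
  "harnack \<mu> \<pi> \<longleftrightarrow> (\<exists>c1 c2 c3 c4. c1 > 0 \<and> c2 > 0 \<and> c3 > 0 \<and> c4 > 0 \<and>
     (\<forall>x y n. gdist \<mu> x y \<le> n \<longrightarrow>
        c1 / vol \<mu> \<pi> x (sqrt (real n)) * exp (- (real (gdist \<mu> x y))\<^sup>2 / (c2 * real n))
          \<le> heat_kernel \<mu> \<pi> n x y \<and>
        heat_kernel \<mu> \<pi> n x y
          \<le> c3 / vol \<mu> \<pi> x (sqrt (real n)) * exp (- (real (gdist \<mu> x y))\<^sup>2 / (c4 * real n))))"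

definition controlled :: "('a \<Rightarrow> 'a \<Rightarrow> real) \<Rightarrow> ('a \<Rightarrow> real) \<Rightarrow> bool" where
  "controlled \<mu> \<pi> \<longleftrightarrow> (\<exists>Cc > 1. \<forall>x y. adj \<mu> x y \<longrightarrow> \<mu> x y / \<pi> x \<ge> 1 / Cc)"

definition uniformly_lazy :: "('a \<Rightarrow> 'a \<Rightarrow> real) \<Rightarrow> ('a \<Rightarrow> real) \<Rightarrow> bool" where
  "uniformly_lazy \<mu> \<pi> \<longleftrightarrow> (\<exists>Ce. 0 < Ce \<and> Ce < 1 \<and> (\<forall>x. kernel \<mu> \<pi> x x \<ge> Ce))"

text \<open>Gamma = UNIV - K. Outer boundary: vertices outside Gamma adjacent to Gamma.
  Inner boundary: vertices of Gamma adjacent to a vertex outside Gamma.\<close>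
definition outer_boundary :: "('a \<Rightarrow> 'a \<Rightarrow> real) \<Rightarrow> 'a set \<Rightarrow> 'a set" where
  "outer_boundary \<mu> K = {v. v \<in> K \<and> (\<exists>u. u \<notin> K \<and> adj \<mu> u v)}"

definition inner_boundary :: "('a \<Rightarrow> 'a \<Rightarrow> real) \<Rightarrow> 'a set \<Rightarrow> 'a set" where
  "inner_boundary \<mu> K = {u. u \<notin> K \<and> (\<exists>v. v \<in> K \<and> adj \<mu> u v)}"

definition bvol :: "('a \<Rightarrow> 'a \<Rightarrow> real) \<Rightarrow> ('a \<Rightarrow> real) \<Rightarrow> 'a set \<Rightarrow> 'a \<Rightarrow> real \<Rightarrow> real" where
  "bvol \<mu> \<pi> K x r = (\<Sum>y\<in>gball \<mu> x r \<inter> outer_boundary \<mu> K. \<pi> y)"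

text \<open>hit_within n x = P^x(tau_K \<le> n) for the walk driven by the kernel (Markov property recursion).\<close>
primrec hit_within :: "('a \<Rightarrow> 'a \<Rightarrow> real) \<Rightarrow> ('a \<Rightarrow> real) \<Rightarrow> 'a set \<Rightarrow> nat \<Rightarrow> 'a \<Rightarrow> real" where
  "hit_within \<mu> \<pi> K 0 x = (if x \<in> K then 1 else 0)"
| "hit_within \<mu> \<pi> K (Suc n) x =
     (if x \<in> K then 1 else (\<Sum>y\<in>insert x (nbrs \<mu> x). kernel \<mu> \<pi> x y * hit_within \<mu> \<pi> K n y))"

text \<open>psi_K(x) = P^x(tau_K < infinity) = sup_n P^x(tau_K \<le> n).\<close>
definition hitting_prob :: "('a \<Rightarrow> 'a \<Rightarrow> real) \<Rightarrow> ('a \<Rightarrow> real) \<Rightarrow> 'a set \<Rightarrow> 'a \<Rightarrow> real" where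
  "hitting_prob \<mu> \<pi> K x = (SUP n. hit_within \<mu> \<pi> K n x)"

definition set_dist :: "('a \<Rightarrow> 'a \<Rightarrow> real) \<Rightarrow> 'a \<Rightarrow> 'a set \<Rightarrow> nat" where
  "set_dist \<mu> x K = (INF k\<in>K. gdist \<mu> x k)"

end

theory Submission
  imports Defs "HOL-Real_Asymp.Real_Asymp"
begin

text \<open>Before entering K the walk has to stand on the outer boundary, so a union bound over that
  time gives psi_K(x) \<le> sum over m and boundary points z of p(m, x, z) pi(z). By the Gaussian upper
  bound the contribution of z is at most a constant times the sum over m \<ge> d(x, z) of
  exp (- d(x, z)^2 / (c m)) / V(x, sqrt m). Times m \<ge> d(x, z)^2 contribute at most 1 / V(x, sqrt m).
  The shorter times are handled by volume doubling, which follows from the Gaussian lower bound: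
  together they contribute at most a constant multiple of the sum of 1 / V(x, sqrt m) over
  d(x, z)^2 \<le> m < 4 d(x, z)^2. Exchanging the sums over z and m collects pi(z) over the boundary
  points with d(x, z) \<le> sqrt m, which is V_\<partial>\<Gamma>(x, sqrt m).\<close>

lemma power_mult_exp_neg_pow2_bounded:
  fixes D a :: real
  assumes "D > 0" "a > 0"
  shows "\<exists>B>0. \<forall>k::nat. D ^ k * exp (- (a * 2 ^ k)) \<le> B"
proof -
  have "(\<lambda>k::nat. exp (real k * ln D - a * 2 ^ k)) \<longlonglongrightarrow> 0"
    using \<open>a > 0\<close> by real_asymp
  then have "Bseq (\<lambda>k::nat. exp (real k * ln D - a * 2 ^ k))"
    by (intro convergent_imp_Bseq convergentI)
  then obtain B where "B > 0" "\<And>k::nat. exp (real k * ln D - a * 2 ^ k) \<le> B"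
    by (auto simp: Bseq_def)
  moreover have "D ^ k * exp (- (a * 2 ^ k)) = exp (real k * ln D - a * 2 ^ k)" for k :: nat
    using \<open>D > 0\<close> by (simp add: exp_diff exp_of_nat_mult exp_minus field_simps)
  ultimately show ?thesis
    by metis
qed

lemma exists_pow2_mult_between:
  fixes m N :: nat
  assumes "0 < m" "m \<le> N"
  shows "\<exists>k. N \<le> 2 ^ k * m \<and> 2 ^ k * m < 2 * N"
proof -
  have "N < 2 ^ N"
    by (rule less_exp)
  also have "\<dots> \<le> 2 ^ N * m"
    using \<open>0 < m\<close> by simp
  finally have "N \<le> 2 ^ N * m"
    by simp
  then obtain k where k: "N \<le> 2 ^ k * m" and least: "\<And>j. j < k \<Longrightarrow> \<not> N \<le> 2 ^ j * m"
    using exists_least_iff[of "\<lambda>k. N \<le> 2 ^ k * m"] by blast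
  show ?thesis
  proof (cases k)
    case 0
    then show ?thesis
      using k assms by (intro exI[of _ 0]) simp
  next
    case (Suc j)
    then show ?thesis
      using k least[of j] by (intro exI[of _ k]) simp
  qed
qed

lemma ennreal_SUP_le_suminf:
  fixes g t :: "nat \<Rightarrow> real"
  assumes t_nonneg: "\<And>m. t m \<ge> 0" and partial: "\<And>n. \<exists>N. g n \<le> (\<Sum>m<N. t m)"
  shows "ennreal (SUP n. g n) \<le> (\<Sum>m. ennreal (t m))"
proof (cases "(\<Sum>m. ennreal (t m)) = top")
  case False
  then obtain r where r: "(\<Sum>m. ennreal (t m)) = ennreal r" "0 \<le> r"
    by (cases "\<Sum>m. ennreal (t m)") auto
  have "g n \<le> r" for n
  proof -
    obtain N where "g n \<le> (\<Sum>m<N. t m)"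
      using partial by blast
    moreover have "ennreal (\<Sum>m<N. t m) \<le> ennreal r"
      using t_nonneg by (simp flip: r(1) sum_ennreal add: sum_le_suminf)
    ultimately show ?thesis
      using r(2) by (simp add: ennreal_le_iff)
  qed
  then show ?thesis
    using r by (simp add: cSUP_least ennreal_leI)
qed simp

locale doubling_function =
  fixes f :: "nat \<Rightarrow> real" and D :: real
  assumes f_pos: "f n > 0"
    and f_mono: "m \<le> n \<Longrightarrow> f m \<le> f n"
    and f_doubling: "f (2 * n) \<le> D * f n"
begin

lemma one_le_D: "1 \<le> D"
  using f_doubling[of 0] f_pos[of 0] by simp

lemma doubling_iterate: "f (2 ^ k * m) \<le> D ^ k * f m"
proof (induction k)
  case (Suc k)
  have "f (2 ^ Suc k * m) \<le> D * f (2 ^ k * m)"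
    using f_doubling[of "2 ^ k * m"] by (simp add: mult.assoc)
  also have "\<dots> \<le> D * (D ^ k * f m)"
    using Suc one_le_D by (intro mult_left_mono) auto
  finally show ?case
    by simp
qed simp

text \<open>Passing from time m to time 4 M takes about log2 (4 M / m) doublings, which cost at most
  a factor D per doubling; the Gaussian factor decays doubly exponentially in that number.\<close>
lemma short_range_bound:
  assumes B: "\<And>k::nat. D ^ k * exp (- (2 ^ k / (8 * c))) \<le> B"
    and c: "c > 0" and m: "0 < m" "m < M"
  shows "exp (- real M / (c * real m)) / f m \<le> B / f (4 * M)"
proof -
  obtain k where k: "4 * M \<le> 2 ^ k * m" "2 ^ k * m < 2 * (4 * M)"
    using exists_pow2_mult_between[of m "4 * M"] m by auto
  have "real (2 ^ k * m) < real (8 * M)"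
    using k(2) by linarith
  then have "2 ^ k / (8 * c) \<le> real M / (c * real m)"
    using c m by (simp add: field_simps)
  then have exp_le: "exp (- real M / (c * real m)) \<le> exp (- (2 ^ k / (8 * c)))"
    by simp
  have "f (4 * M) \<le> D ^ k * f m"
    using f_mono[OF k(1)] doubling_iterate[of k m] by linarith
  then have inv_le: "1 / f m \<le> D ^ k / f (4 * M)"
    using f_pos[of m] f_pos[of "4 * M"] by (simp add: field_simps)
  have "exp (- real M / (c * real m)) / f m \<le> exp (- (2 ^ k / (8 * c))) * (D ^ k / f (4 * M))"
    using mult_mono[OF exp_le inv_le exp_ge_zero] f_pos[of m] by (simp add: less_imp_le)
  also have "\<dots> \<le> B / f (4 * M)"
    using B[of k] f_pos[of "4 * M"] by (simp add: divide_right_mono mult.commute)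
  finally show ?thesis .
qed

lemma block_le_tail_sum:
  assumes "4 * M \<le> N"
  shows "3 * real M / f (4 * M) \<le> (\<Sum>m<N. if M \<le> m then 1 / f m else 0)"
proof -
  have "3 * real M / f (4 * M) = (\<Sum>m\<in>{M..<4 * M}. 1 / f (4 * M))"
    by simp
  also have "\<dots> \<le> (\<Sum>m\<in>{M..<4 * M}. 1 / f m)"
    using f_pos f_mono by (intro sum_mono divide_left_mono) auto
  also have "\<dots> = (\<Sum>m\<in>{M..<4 * M}. if M \<le> m then 1 / f m else 0)"
    by simp
  also have "\<dots> \<le> (\<Sum>m<N. if M \<le> m then 1 / f m else 0)"
    using assms f_pos by (intro sum_mono2) (auto intro: less_imp_le)
  finally show ?thesis .
qed

lemma gaussian_sum_le_tail_sum:
  assumes B: "\<And>k::nat. D ^ k * exp (- (2 ^ k / (8 * c))) \<le> B"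
    and c: "c > 0" and N: "n < N" "4 * \<rho>\<^sup>2 \<le> N"
  shows "(\<Sum>m\<le>n. if \<rho> \<le> m then exp (- (real \<rho>)\<^sup>2 / (c * real m)) / f m else 0)
    \<le> (1 + B / 3) * (\<Sum>m<N. if \<rho>\<^sup>2 \<le> m then 1 / f m else 0)"
proof -
  define M where "M = \<rho>\<^sup>2"
  define E where "E m = exp (- real M / (c * real m)) / f m" for m
  define R where "R = (\<Sum>m<N. if M \<le> m then 1 / f m else 0)"
  have B_nonneg: "B \<ge> 0"
    using B[of 0] by simp (meson exp_ge_zero order_trans)
  have short_term: "(if \<rho> \<le> m \<and> m < M then E m else 0) \<le> (if m < M then B / f (4 * M) else 0)" for m
  proof (cases "\<rho> \<le> m \<and> m < M")
    case True
    then have "0 < m"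
      by (cases \<rho>) (auto simp: M_def)
    then show ?thesis
      using True short_range_bound[OF B c] by (simp add: E_def)
  qed (use B_nonneg f_pos[of "4 * M"] in auto)
  have "(\<Sum>m\<le>n. if \<rho> \<le> m \<and> m < M then E m else 0)
      \<le> (\<Sum>m\<le>n. if m < M then B / f (4 * M) else 0)"
    using short_term by (rule sum_mono)
  also have "\<dots> = real (card {m\<in>{..n}. m < M}) * (B / f (4 * M))"
    by (simp flip: sum.inter_filter)
  also have "\<dots> \<le> real M * (B / f (4 * M))"
    using card_mono[of "{..<M}" "{m\<in>{..n}. m < M}"] B_nonneg f_pos[of "4 * M"]
    by (intro mult_right_mono) auto
  also have "\<dots> = B / 3 * (3 * real M / f (4 * M))"
    by simp
  also have "\<dots> \<le> B / 3 * R"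
    using block_le_tail_sum[of M N] N B_nonneg by (intro mult_left_mono) (simp_all add: M_def R_def)
  finally have short: "(\<Sum>m\<le>n. if \<rho> \<le> m \<and> m < M then E m else 0) \<le> B / 3 * R" .
  have "E m \<le> 1 / f m" for m
    using c f_pos[of m] by (auto simp: E_def divide_right_mono)
  then have "(\<Sum>m\<le>n. if M \<le> m then E m else 0) \<le> (\<Sum>m\<le>n. if M \<le> m then 1 / f m else 0)"
    by (intro sum_mono) auto
  also have "\<dots> \<le> R"
    unfolding R_def using N f_pos by (intro sum_mono2) (auto intro: less_imp_le)
  finally have long: "(\<Sum>m\<le>n. if M \<le> m then E m else 0) \<le> R" .
  have "\<rho> \<le> M"
    by (cases \<rho>) (auto simp: M_def power2_eq_square)
  then have "(\<Sum>m\<le>n. if \<rho> \<le> m then E m else 0)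
      = (\<Sum>m\<le>n. if \<rho> \<le> m \<and> m < M then E m else 0) + (\<Sum>m\<le>n. if M \<le> m then E m else 0)"
    by (auto simp flip: sum.distrib intro: sum.cong)
  also have "\<dots> \<le> (1 + B / 3) * R"
    using short long by (simp add: algebra_simps)
  finally show ?thesis
    by (simp add: E_def R_def M_def cong: if_cong)
qed

end

locale walk_graph =
  fixes \<mu> :: "'a \<Rightarrow> 'a \<Rightarrow> real" and \<pi> :: "'a \<Rightarrow> real"
  assumes weighted_graph: "weighted_graph \<mu> \<pi>"
    and finite_nbrs: "finite (nbrs \<mu> x)"
    and weight_nonneg: "\<mu> x y \<ge> 0"
begin

lemma pi_pos: "\<pi> x > 0"
  using weighted_graph by (simp add: weighted_graph_def)

lemma gdist_relpow: "(x, y) \<in> adjrel \<mu> ^^ gdist \<mu> x y"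
proof -
  have "(x, y) \<in> (adjrel \<mu>)\<^sup>*"
    using weighted_graph by (simp add: weighted_graph_def)
  then show ?thesis
    unfolding gdist_def by (meson LeastI rtrancl_power)
qed

lemma gdist_le_relpow: "(x, y) \<in> adjrel \<mu> ^^ n \<Longrightarrow> gdist \<mu> x y \<le> n"
  unfolding gdist_def by (rule Least_le)

lemma gdist_self [simp]: "gdist \<mu> x x = 0"
  using gdist_le_relpow[of x x 0] by simp

lemma gdist_le_Suc_gdist_nbr:
  assumes "w \<in> insert y (nbrs \<mu> y)"
  shows "gdist \<mu> y z \<le> Suc (gdist \<mu> w z)"
proof (cases "w = y")
  case False
  then have "(y, w) \<in> adjrel \<mu>"
    using assms by (simp add: adjrel_def nbrs_def)
  from relpow_Suc_I2[OF this gdist_relpow] show ?thesis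
    by (rule gdist_le_relpow)
qed simp

lemma finite_relpow_image: "finite {y. (x, y) \<in> adjrel \<mu> ^^ k}"
proof (induction k)
  case (Suc k)
  have "{y. (x, y) \<in> adjrel \<mu> ^^ Suc k} \<subseteq> (\<Union>w\<in>{y. (x, y) \<in> adjrel \<mu> ^^ k}. nbrs \<mu> w)"
    by (auto simp: adjrel_def nbrs_def)
  then show ?case
    using Suc finite_nbrs by (meson finite_UN_I finite_subset)
qed simp

lemma finite_gball: "finite (gball \<mu> x r)"
proof -
  have "gball \<mu> x r \<subseteq> (\<Union>k\<le>nat \<lfloor>r\<rfloor>. {y. (x, y) \<in> adjrel \<mu> ^^ k})"
    using gdist_relpow by (fastforce simp: gball_def le_nat_iff le_floor_iff)
  then show ?thesis
    using finite_relpow_image by (meson finite_UN_I finite_atMost finite_subset)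
qed

lemma sum_nbrs_weight_le: "(\<Sum>y\<in>nbrs \<mu> x. \<mu> x y) \<le> \<pi> x"
  using weighted_graph finite_nbrs unfolding weighted_graph_def by (meson order_refl)

lemma kernel_nonneg: "kernel \<mu> \<pi> x z \<ge> 0"
  using sum_nbrs_weight_le[of x] pi_pos[of x] weight_nonneg[of x z]
  by (cases "x = z") (simp_all add: kernel_def)

lemma kernel_row_sum: "(\<Sum>z\<in>insert x (nbrs \<mu> x). kernel \<mu> \<pi> x z) = 1"
proof -
  have "x \<notin> nbrs \<mu> x"
    by (simp add: nbrs_def adj_def)
  moreover have "(\<Sum>z\<in>nbrs \<mu> x. kernel \<mu> \<pi> x z) = (\<Sum>z\<in>nbrs \<mu> x. \<mu> x z) / \<pi> x"
    by (auto simp: kernel_def nbrs_def adj_def sum_divide_distrib intro: sum.cong)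
  ultimately show ?thesis
    using finite_nbrs[of x] by (simp add: kernel_def)
qed

lemma kpow_nonneg: "kpow \<mu> \<pi> n x y \<ge> 0"
  by (induction n arbitrary: x) (auto intro!: sum_nonneg mult_nonneg_nonneg kernel_nonneg)

lemma kpow_eq_0_beyond_gdist: "n < gdist \<mu> x y \<Longrightarrow> kpow \<mu> \<pi> n x y = 0"
proof (induction n arbitrary: x)
  case 0
  then show ?case by auto
next
  case (Suc n)
  have "kpow \<mu> \<pi> n w y = 0" if "w \<in> insert x (nbrs \<mu> x)" for w
    using Suc gdist_le_Suc_gdist_nbr[OF that, of y] by simp
  then show ?case by simp
qed

lemma sum_kpow_le_1: "finite A \<Longrightarrow> (\<Sum>y\<in>A. kpow \<mu> \<pi> n x y) \<le> 1"
proof (induction n arbitrary: x)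
  case 0
  then show ?case by (simp add: sum.delta)
next
  case (Suc n)
  have "(\<Sum>y\<in>A. kpow \<mu> \<pi> (Suc n) x y)
      = (\<Sum>z\<in>insert x (nbrs \<mu> x). kernel \<mu> \<pi> x z * (\<Sum>y\<in>A. kpow \<mu> \<pi> n z y))"
    by (simp add: sum_distrib_left) (rule sum.swap)
  also have "\<dots> \<le> (\<Sum>z\<in>insert x (nbrs \<mu> x). kernel \<mu> \<pi> x z)"
    using Suc by (intro sum_mono mult_right_le_one_le kernel_nonneg sum_nonneg kpow_nonneg) auto
  finally show ?case
    by (simp add: kernel_row_sum)
qed

lemma vol_pos: "0 \<le> r \<Longrightarrow> vol \<mu> \<pi> x r > 0"
  unfolding vol_def using finite_gball[of x r]
  by (intro sum_pos2[where i = x]) (auto simp: gball_def pi_pos less_imp_le)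

lemma vol_mono: "r \<le> s \<Longrightarrow> vol \<mu> \<pi> x r \<le> vol \<mu> \<pi> x s"
  unfolding vol_def using finite_gball[of x s]
  by (intro sum_mono2) (auto simp: gball_def pi_pos less_imp_le)

lemma bvol_nonneg: "bvol \<mu> \<pi> K x r \<ge> 0"
  unfolding bvol_def by (intro sum_nonneg) (simp add: pi_pos less_imp_le)

lemma vol_doubling:
  assumes c1: "c1 > 0" and c2: "c2 > 0"
    and lower: "\<And>y. gdist \<mu> x y \<le> n \<Longrightarrow>
      c1 / vol \<mu> \<pi> x (sqrt (real n)) * exp (- (real (gdist \<mu> x y))\<^sup>2 / (c2 * real n))
        \<le> heat_kernel \<mu> \<pi> n x y"
  shows "vol \<mu> \<pi> x (sqrt (real (2 * n))) \<le> exp (2 / c2) / c1 * vol \<mu> \<pi> x (sqrt (real n))"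
proof -
  let ?V = "vol \<mu> \<pi> x (sqrt (real n))"
  define a where "a = c1 * exp (- (2 / c2)) / ?V"
  have V_pos: "?V > 0"
    by (rule vol_pos) simp
  \<comment> \<open>On the ball of radius sqrt (2 n) the lower bound is at least a, and kpow has mass at most 1.\<close>
  have a_le_kpow: "\<pi> y * a \<le> kpow \<mu> \<pi> n x y" if y: "y \<in> gball \<mu> x (sqrt (real (2 * n)))" for y
  proof -
    define g where "g = gdist \<mu> x y"
    have "(real g)\<^sup>2 \<le> (sqrt (real (2 * n)))\<^sup>2"
      using y by (intro power_mono) (simp_all add: gball_def g_def)
    then have g_sq: "(real g)\<^sup>2 \<le> 2 * real n"
      by simp
    have g_le: "g \<le> n"
    proof (rule ccontr)
      assume "\<not> g \<le> n"
      then have "(real n + 1)\<^sup>2 \<le> (real g)\<^sup>2"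
        by (intro power_mono) auto
      moreover have "(real n + 1)\<^sup>2 = (real n)\<^sup>2 + 1 + 2 * real n"
        by (simp add: power2_sum)
      ultimately show False
        using g_sq zero_le_power2[of "real n"] by linarith
    qed
    have "(real g)\<^sup>2 / (c2 * real n) \<le> 2 / c2"
      using g_sq c2 g_le by (cases "n = 0") (simp_all add: field_simps)
    then have "c1 / ?V * exp (- (2 / c2)) \<le> c1 / ?V * exp (- (real g)\<^sup>2 / (c2 * real n))"
      using c1 V_pos by (intro mult_left_mono) auto
    also have "\<dots> \<le> heat_kernel \<mu> \<pi> n x y"
      using lower g_le unfolding g_def by blast
    finally show ?thesis
      using pi_pos[of y] by (simp add: a_def heat_kernel_def pos_le_divide_eq mult.commute)
  qed
  have "vol \<mu> \<pi> x (sqrt (real (2 * n))) * a = (\<Sum>y\<in>gball \<mu> x (sqrt (real (2 * n))). \<pi> y * a)"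
    by (simp add: vol_def sum_distrib_right)
  also have "\<dots> \<le> (\<Sum>y\<in>gball \<mu> x (sqrt (real (2 * n))). kpow \<mu> \<pi> n x y)"
    using a_le_kpow by (rule sum_mono)
  also have "\<dots> \<le> 1"
    using finite_gball by (rule sum_kpow_le_1)
  finally show ?thesis
    using c1 V_pos by (simp add: a_def field_simps exp_minus)
qed

text \<open>The probability of being on the outer boundary at time m. Restricting to the ball of
  radius m keeps the sum finite without changing it, as kpow m y vanishes outside that ball.\<close>
definition boundary_prob :: "'a set \<Rightarrow> nat \<Rightarrow> 'a \<Rightarrow> real" where
  "boundary_prob K m y = (\<Sum>z\<in>outer_boundary \<mu> K \<inter> gball \<mu> y (real m). kpow \<mu> \<pi> m y z)"

lemma boundary_prob_nonneg: "boundary_prob K m y \<ge> 0"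
  unfolding boundary_prob_def by (intro sum_nonneg kpow_nonneg)

lemma boundary_prob_eq_sum_superset:
  assumes "finite Z" "outer_boundary \<mu> K \<inter> gball \<mu> y (real m) \<subseteq> Z" "Z \<subseteq> outer_boundary \<mu> K"
  shows "boundary_prob K m y = (\<Sum>z\<in>Z. kpow \<mu> \<pi> m y z)"
  unfolding boundary_prob_def
  using assms by (intro sum.mono_neutral_left) (auto simp: gball_def not_le intro!: kpow_eq_0_beyond_gdist)

lemma boundary_prob_0: "y \<in> outer_boundary \<mu> K \<Longrightarrow> boundary_prob K 0 y = 1"
  using finite_gball[of y 0] by (simp add: boundary_prob_def gball_def Int_def sum.delta)

lemma boundary_prob_Suc:
  "boundary_prob K (Suc m) y = (\<Sum>w\<in>insert y (nbrs \<mu> y). kernel \<mu> \<pi> y w * boundary_prob K m w)"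
proof -
  let ?Z = "outer_boundary \<mu> K \<inter> gball \<mu> y (real (Suc m))"
  have "boundary_prob K m w = (\<Sum>z\<in>?Z. kpow \<mu> \<pi> m w z)" if "w \<in> insert y (nbrs \<mu> y)" for w
  proof (rule boundary_prob_eq_sum_superset)
    have "gball \<mu> w (real m) \<subseteq> gball \<mu> y (real (Suc m))"
    proof
      fix z
      assume "z \<in> gball \<mu> w (real m)"
      then have "gdist \<mu> y z \<le> Suc m"
        using gdist_le_Suc_gdist_nbr[OF that, of z] by (simp add: gball_def)
      then show "z \<in> gball \<mu> y (real (Suc m))"
        by (simp add: gball_def del: of_nat_Suc)
    qed
    then show "outer_boundary \<mu> K \<inter> gball \<mu> w (real m) \<subseteq> ?Z"
      by blast
  qed (simp_all add: finite_gball)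
  then have "(\<Sum>w\<in>insert y (nbrs \<mu> y). kernel \<mu> \<pi> y w * boundary_prob K m w)
      = (\<Sum>w\<in>insert y (nbrs \<mu> y). \<Sum>z\<in>?Z. kernel \<mu> \<pi> y w * kpow \<mu> \<pi> m w z)"
    by (simp add: sum_distrib_left)
  also have "\<dots> = boundary_prob K (Suc m) y"
    unfolding boundary_prob_def kpow.simps by (rule sum.swap)
  finally show ?thesis ..
qed

text \<open>A walk started outside K must step onto the outer boundary before it is in K; this is
  a union bound over the time of that step.\<close>
lemma hit_within_le_sum_boundary_prob:
  "y \<notin> K \<or> y \<in> outer_boundary \<mu> K \<Longrightarrow>
    hit_within \<mu> \<pi> K n y \<le> (\<Sum>m\<le>n. boundary_prob K m y)"
proof (induction n arbitrary: y)
  case 0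
  then show ?case
    by (auto simp: boundary_prob_0 boundary_prob_nonneg)
next
  case (Suc n)
  show ?case
  proof (cases "y \<in> K")
    case True
    then have "hit_within \<mu> \<pi> K (Suc n) y = boundary_prob K 0 y"
      using Suc.prems by (simp add: boundary_prob_0)
    also have "\<dots> \<le> (\<Sum>m\<le>Suc n. boundary_prob K m y)"
      by (rule member_le_sum) (simp_all add: boundary_prob_nonneg)
    finally show ?thesis .
  next
    case False
    have "w \<notin> K \<or> w \<in> outer_boundary \<mu> K" if "w \<in> insert y (nbrs \<mu> y)" for w
      using that False by (auto simp: outer_boundary_def nbrs_def)
    then have "hit_within \<mu> \<pi> K (Suc n) y
        \<le> (\<Sum>w\<in>insert y (nbrs \<mu> y). kernel \<mu> \<pi> y w * (\<Sum>m\<le>n. boundary_prob K m w))"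
      using False Suc.IH by (auto intro!: sum_mono mult_left_mono kernel_nonneg)
    also have "\<dots> = (\<Sum>m\<le>n. boundary_prob K (Suc m) y)"
      by (simp add: boundary_prob_Suc sum_distrib_left sum.swap[of _ "insert y (nbrs \<mu> y)"])
    also have "\<dots> \<le> boundary_prob K 0 y + (\<Sum>m\<le>n. boundary_prob K (Suc m) y)"
      by (simp add: boundary_prob_nonneg)
    also have "\<dots> = (\<Sum>m\<le>Suc n. boundary_prob K m y)"
      by (rule sum.atMost_Suc_shift[symmetric])
    finally show ?thesis .
  qed
qed

end

lemma controlled_imp_walk_graph:
  assumes graph: "weighted_graph \<mu> \<pi>" and "controlled \<mu> \<pi>"
  shows "walk_graph \<mu> \<pi>"
proof
  obtain Cc where Cc: "Cc > 1" and lower: "\<And>x y. adj \<mu> x y \<Longrightarrow> \<mu> x y / \<pi> x \<ge> 1 / Cc"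
    using \<open>controlled \<mu> \<pi>\<close> unfolding controlled_def by blast
  have pi_pos: "\<pi> x > 0" for x
    using graph by (simp add: weighted_graph_def)
  have nbr_weight: "\<mu> x y \<ge> \<pi> x / Cc" if "y \<in> nbrs \<mu> x" for x y
    using lower[of x y] that pi_pos[of x] Cc by (simp add: nbrs_def field_simps)
  show "\<mu> x y \<ge> 0" for x y
  proof (cases "adj \<mu> x y")
    case True
    then have "\<pi> x / Cc \<le> \<mu> x y"
      using nbr_weight by (simp add: nbrs_def)
    moreover have "0 < \<pi> x / Cc"
      using pi_pos[of x] Cc by simp
    ultimately show ?thesis
      by linarith
  next
    case False
    then show ?thesis
      using graph by (auto simp: adj_def weighted_graph_def)
  qed
  show "finite (nbrs \<mu> x)" for x
  proof (rule ccontr)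
    assume "infinite (nbrs \<mu> x)"
    then obtain F where F: "F \<subseteq> nbrs \<mu> x" "finite F" "card F = nat \<lceil>Cc\<rceil> + 1"
      using infinite_arbitrarily_large by blast
    have "real (card F) * (\<pi> x / Cc) \<le> (\<Sum>y\<in>F. \<mu> x y)"
      using F nbr_weight sum_mono[of F "\<lambda>_. \<pi> x / Cc" "\<mu> x"] by auto
    also have "\<dots> \<le> \<pi> x"
      using graph F unfolding weighted_graph_def by blast
    finally have "real (card F) \<le> Cc"
      using pi_pos[of x] Cc by (simp add: field_simps)
    with F show False
      by linarith
  qed
qed (use assms in \<open>simp add: walk_graph_def\<close>)

locale harnack_graph = walk_graph \<mu> \<pi>
  for \<mu> :: "'a \<Rightarrow> 'a \<Rightarrow> real" and \<pi> :: "'a \<Rightarrow> real" +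
  fixes c1 c2 c3 c4 :: real
  assumes c_pos: "c1 > 0" "c2 > 0" "c3 > 0" "c4 > 0"
    and heat_lower: "gdist \<mu> x y \<le> n \<Longrightarrow>
      c1 / vol \<mu> \<pi> x (sqrt (real n)) * exp (- (real (gdist \<mu> x y))\<^sup>2 / (c2 * real n))
        \<le> heat_kernel \<mu> \<pi> n x y"
    and heat_upper: "gdist \<mu> x y \<le> n \<Longrightarrow>
      heat_kernel \<mu> \<pi> n x y
        \<le> c3 / vol \<mu> \<pi> x (sqrt (real n)) * exp (- (real (gdist \<mu> x y))\<^sup>2 / (c4 * real n))"

lemma harnack_imp_harnack_graph:
  assumes "weighted_graph \<mu> \<pi>" "controlled \<mu> \<pi>" "harnack \<mu> \<pi>"
  shows "\<exists>c1 c2 c3 c4. harnack_graph \<mu> \<pi> c1 c2 c3 c4"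
proof -
  obtain c1 c2 c3 c4 where "c1 > 0" "c2 > 0" "c3 > 0" "c4 > 0"
    and "\<forall>x y n. gdist \<mu> x y \<le> n \<longrightarrow>
      c1 / vol \<mu> \<pi> x (sqrt (real n)) * exp (- (real (gdist \<mu> x y))\<^sup>2 / (c2 * real n))
        \<le> heat_kernel \<mu> \<pi> n x y \<and>
      heat_kernel \<mu> \<pi> n x y
        \<le> c3 / vol \<mu> \<pi> x (sqrt (real n)) * exp (- (real (gdist \<mu> x y))\<^sup>2 / (c4 * real n))"
    using \<open>harnack \<mu> \<pi>\<close> unfolding harnack_def by blast
  with controlled_imp_walk_graph[OF assms(1,2)] have "harnack_graph \<mu> \<pi> c1 c2 c3 c4"
    unfolding harnack_graph_def harnack_graph_axioms_def by blast
  then show ?thesis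
    by blast
qed

context harnack_graph
begin

lemma doubling_function_vol: "doubling_function (\<lambda>n. vol \<mu> \<pi> x (sqrt (real n))) (exp (2 / c2) / c1)"
proof
  show "vol \<mu> \<pi> x (sqrt (real (2 * n))) \<le> exp (2 / c2) / c1 * vol \<mu> \<pi> x (sqrt (real n))" for n
    by (rule vol_doubling[OF c_pos(1,2) heat_lower])
qed (simp_all add: vol_pos vol_mono)

lemma kpow_le_heat_upper:
  "kpow \<mu> \<pi> m x z \<le> c3 * \<pi> z *
    (if gdist \<mu> x z \<le> m
     then exp (- (real (gdist \<mu> x z))\<^sup>2 / (c4 * real m)) / vol \<mu> \<pi> x (sqrt (real m)) else 0)"
proof (cases "gdist \<mu> x z \<le> m")
  case True
  have "kpow \<mu> \<pi> m x z = \<pi> z * heat_kernel \<mu> \<pi> m x z"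
    using pi_pos[of z] by (simp add: heat_kernel_def)
  also have "\<dots> \<le> \<pi> z * (c3 / vol \<mu> \<pi> x (sqrt (real m))
      * exp (- (real (gdist \<mu> x z))\<^sup>2 / (c4 * real m)))"
    using heat_upper[OF True] pi_pos[of z] by (intro mult_left_mono) auto
  finally show ?thesis
    using True by (simp add: mult_ac)
qed (simp add: kpow_eq_0_beyond_gdist)

lemma boundary_prob_le_heat_upper:
  assumes "m \<le> n"
  shows "boundary_prob K m x \<le> (\<Sum>z\<in>outer_boundary \<mu> K \<inter> gball \<mu> x (real n). c3 * \<pi> z *
    (if gdist \<mu> x z \<le> m
     then exp (- (real (gdist \<mu> x z))\<^sup>2 / (c4 * real m)) / vol \<mu> \<pi> x (sqrt (real m)) else 0))"
proof -
  have "boundary_prob K m x = (\<Sum>z\<in>outer_boundary \<mu> K \<inter> gball \<mu> x (real n). kpow \<mu> \<pi> m x z)"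
    using assms finite_gball[of x "real n"]
    by (intro boundary_prob_eq_sum_superset) (auto simp: gball_def)
  then show ?thesis
    using kpow_le_heat_upper by (simp add: sum_mono)
qed

lemma set_dist_le_gdist: "z \<in> K \<Longrightarrow> set_dist \<mu> x K \<le> gdist \<mu> x z"
  unfolding set_dist_def by (rule cINF_lower) simp_all

lemma boundary_weight_le_bvol:
  "(\<Sum>z\<in>outer_boundary \<mu> K \<inter> gball \<mu> x (real n). if (gdist \<mu> x z)\<^sup>2 \<le> m then \<pi> z else 0)
    \<le> (if (real (set_dist \<mu> x K))\<^sup>2 \<le> real m then bvol \<mu> \<pi> K x (sqrt (real m)) else 0)"
proof (cases "(real (set_dist \<mu> x K))\<^sup>2 \<le> real m")
  case True
  let ?Z = "outer_boundary \<mu> K \<inter> gball \<mu> x (real n)"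
  have "(\<Sum>z\<in>?Z. if (gdist \<mu> x z)\<^sup>2 \<le> m then \<pi> z else 0)
      = (\<Sum>z\<in>{z\<in>?Z. (gdist \<mu> x z)\<^sup>2 \<le> m}. \<pi> z)"
    using finite_gball by (intro sum.inter_filter[symmetric]) blast
  also have "\<dots> \<le> bvol \<mu> \<pi> K x (sqrt (real m))"
    unfolding bvol_def
  proof (rule sum_mono2)
    show "{z\<in>?Z. (gdist \<mu> x z)\<^sup>2 \<le> m} \<subseteq> gball \<mu> x (sqrt (real m)) \<inter> outer_boundary \<mu> K"
      by (auto simp: gball_def real_le_rsqrt simp flip: of_nat_le_iff)
  qed (auto simp: finite_gball pi_pos less_imp_le)
  finally show ?thesis
    using True by simp
next
  case False
  have "\<not> (gdist \<mu> x z)\<^sup>2 \<le> m" if "z \<in> outer_boundary \<mu> K" for z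
  proof -
    have "set_dist \<mu> x K \<le> gdist \<mu> x z"
      using that by (intro set_dist_le_gdist) (simp add: outer_boundary_def)
    then have "(real (set_dist \<mu> x K))\<^sup>2 \<le> real ((gdist \<mu> x z)\<^sup>2)"
      by (simp add: power_mono)
    with False show ?thesis
      by linarith
  qed
  then show ?thesis
    using False by simp
qed

lemma sum_gaussian_le_tail_sum:
  assumes B: "\<And>k::nat. (exp (2 / c2) / c1) ^ k * exp (- (2 ^ k / (8 * c4))) \<le> B"
    and z: "gdist \<mu> x z \<le> n"
  shows "(\<Sum>m\<le>n. if gdist \<mu> x z \<le> m
      then exp (- (real (gdist \<mu> x z))\<^sup>2 / (c4 * real m)) / vol \<mu> \<pi> x (sqrt (real m)) else 0)
    \<le> (1 + B / 3) * (\<Sum>m<n + 4 * n\<^sup>2 + 1.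
      if (gdist \<mu> x z)\<^sup>2 \<le> m then 1 / vol \<mu> \<pi> x (sqrt (real m)) else 0)"
proof -
  interpret vol: doubling_function "\<lambda>m. vol \<mu> \<pi> x (sqrt (real m))" "exp (2 / c2) / c1"
    by (rule doubling_function_vol)
  have "(gdist \<mu> x z)\<^sup>2 \<le> n\<^sup>2"
    using z by (rule power_mono) simp
  then have "4 * (gdist \<mu> x z)\<^sup>2 \<le> n + 4 * n\<^sup>2 + 1"
    by linarith
  then show ?thesis
    by (intro vol.gaussian_sum_le_tail_sum B c_pos) simp_all
qed

lemma hit_within_le_partial_series:
  assumes x: "x \<notin> K"
    and B: "\<And>k::nat. (exp (2 / c2) / c1) ^ k * exp (- (2 ^ k / (8 * c4))) \<le> B"
  shows "hit_within \<mu> \<pi> K n x \<le> (\<Sum>m<n + 4 * n\<^sup>2 + 1.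
    if (real (set_dist \<mu> x K))\<^sup>2 \<le> real m
    then c3 * (1 + B / 3) * bvol \<mu> \<pi> K x (sqrt (real m)) / vol \<mu> \<pi> x (sqrt (real m)) else 0)"
proof -
  define f where "f m = vol \<mu> \<pi> x (sqrt (real m))" for m
  define N where "N = n + 4 * n\<^sup>2 + 1"
  define Z where "Z = outer_boundary \<mu> K \<inter> gball \<mu> x (real n)"
  define h where "h z m = (if gdist \<mu> x z \<le> m
    then exp (- (real (gdist \<mu> x z))\<^sup>2 / (c4 * real m)) / f m else 0)" for z m
  have gaussian_sum: "(\<Sum>m\<le>n. h z m)
      \<le> (1 + B / 3) * (\<Sum>m<N. if (gdist \<mu> x z)\<^sup>2 \<le> m then 1 / f m else 0)"
    if "z \<in> Z" for z
    using sum_gaussian_le_tail_sum[OF B, of x z n] that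
    unfolding h_def f_def N_def Z_def gball_def by simp
  have "hit_within \<mu> \<pi> K n x \<le> (\<Sum>m\<le>n. boundary_prob K m x)"
    using x by (intro hit_within_le_sum_boundary_prob) simp
  also have "\<dots> \<le> (\<Sum>m\<le>n. \<Sum>z\<in>Z. c3 * \<pi> z * h z m)"
    unfolding Z_def h_def f_def by (intro sum_mono boundary_prob_le_heat_upper) simp
  also have "\<dots> = (\<Sum>z\<in>Z. c3 * \<pi> z * (\<Sum>m\<le>n. h z m))"
    by (simp add: sum_distrib_left sum.swap[of _ Z])
  also have "\<dots> \<le> (\<Sum>z\<in>Z. c3 * \<pi> z * ((1 + B / 3) *
      (\<Sum>m<N. if (gdist \<mu> x z)\<^sup>2 \<le> m then 1 / f m else 0)))"
    using gaussian_sum c_pos pi_pos by (intro sum_mono mult_left_mono) (auto intro: less_imp_le)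
  also have "\<dots> = (\<Sum>m<N. c3 * (1 + B / 3) / f m *
      (\<Sum>z\<in>Z. if (gdist \<mu> x z)\<^sup>2 \<le> m then \<pi> z else 0))"
    by (simp add: sum_distrib_left sum.swap[of _ Z] if_distrib mult_ac cong: if_cong)
  also have "\<dots> \<le> (\<Sum>m<N. c3 * (1 + B / 3) / f m *
      (if (real (set_dist \<mu> x K))\<^sup>2 \<le> real m then bvol \<mu> \<pi> K x (sqrt (real m)) else 0))"
  proof (intro sum_mono mult_left_mono)
    show "0 \<le> c3 * (1 + B / 3) / f m" for m
      using B[of 0] c_pos vol_pos[of "sqrt (real m)" x] by (simp add: f_def order_trans[OF exp_ge_zero])
  qed (unfold Z_def, rule boundary_weight_le_bvol)
  finally show ?thesis
    by (simp add: N_def f_def if_distrib cong: if_cong)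
qed

end

theorem theorem2p9:
  fixes \<mu> :: "'a \<Rightarrow> 'a \<Rightarrow> real" and \<pi> :: "'a \<Rightarrow> real" and K :: "'a set"
  assumes "weighted_graph \<mu> \<pi>" and "harnack \<mu> \<pi>"
    and "controlled \<mu> \<pi>" and "uniformly_lazy \<mu> \<pi>"
  shows "\<exists>C. \<forall>x. x \<notin> K \<and> x \<notin> inner_boundary \<mu> K \<longrightarrow>
           ennreal (hitting_prob \<mu> \<pi> K x)
             \<le> (\<Sum>n. if (real (set_dist \<mu> x K))\<^sup>2 \<le> real n
                     then ennreal (C * bvol \<mu> \<pi> K x (sqrt (real n)) / vol \<mu> \<pi> x (sqrt (real n)))
                     else 0)"
proof -
  obtain c1 c2 c3 c4 where "harnack_graph \<mu> \<pi> c1 c2 c3 c4"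
    using harnack_imp_harnack_graph assms(1-3) by blast
  then interpret harnack_graph \<mu> \<pi> c1 c2 c3 c4 .
  obtain B where "B > 0" and B: "\<And>k::nat. (exp (2 / c2) / c1) ^ k * exp (- (2 ^ k / (8 * c4))) \<le> B"
    using power_mult_exp_neg_pow2_bounded[of "exp (2 / c2) / c1" "1 / (8 * c4)"] c_pos by auto
  define C where "C = c3 * (1 + B / 3)"
  define t where "t x n = (if (real (set_dist \<mu> x K))\<^sup>2 \<le> real n
    then C * bvol \<mu> \<pi> K x (sqrt (real n)) / vol \<mu> \<pi> x (sqrt (real n)) else 0)" for x n
  have "ennreal (hitting_prob \<mu> \<pi> K x) \<le> (\<Sum>n. ennreal (t x n))" if "x \<notin> K" for x
    unfolding hitting_prob_def
  proof (rule ennreal_SUP_le_suminf)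
    show "t x n \<ge> 0" for n
      using c_pos \<open>B > 0\<close> vol_pos[of "sqrt (real n)" x] bvol_nonneg[of K x "sqrt (real n)"]
      by (simp add: t_def C_def)
    show "\<exists>N. hit_within \<mu> \<pi> K n x \<le> (\<Sum>m<N. t x m)" for n
      using hit_within_le_partial_series[OF that B] unfolding t_def C_def by blast
  qed
  then show ?thesis
    by (auto simp: t_def if_distrib[of ennreal] cong: if_cong intro!: exI[of _ C])
qed

end
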